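(* Let $N\ge1$, let $q\in\mathbb{C}$ with $[k]_q\ne0$ for $1\le k\le N$, and let $z_1,\dots,z_N$ lie in the open unit disk. Then $$\sum_{\sigma\in\mathbb{S}_N}\mathrm{sgn}(\sigma)\prod_{1\le i<j\le N}\big(z_{\sigma(i)}-qz_{\sigma(j)}-(1-q)z_{\sigma(i)}z_{\sigma(j)}\big)F^{(N)}_\sigma=\frac{\prod_{1\le i<j\le N}(z_i-z_j)}{\prod_{i=1}^N(1-z_i)}.$$
   Context: $[k]_q=1+q+\cdots+q^{k-1}$, $[k]_q!=[1]_q\cdots[k]_q$. For $w_1,\dots,w_N$ in the open unit disk define $t_i=\dfrac{w_1\cdots w_{N-i}}{1-w_1\cdots w_{N-i}}$ for $1\le i\le N-1$ and $$\Phi_N(w_1,\dots,w_N)=\frac{1}{1-w_1\cdots w_N}\sum_{(m_1,\dots,m_n)}\frac{1}{[m_1]_q!\cdots[m_n]_q!}\,t_{m_1}t_{m_1+m_2}\cdots t_{m_1+\cdots+m_{n-1}},$$ the sum running over all compositions $(m_1,\dots,m_n)$ of $N$ (ordered tuples of positive integers summing to $N$; for $n=1$ the product of $t$'s is $1$). $F^{(N)}_\sigma=\Phi_N(z_{\sigma(1)},\dots,z_{\sigma(N)})$. *)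

theory Defs
  imports Complex_Main "HOL-Combinatorics.Permutations"
begin

definition qint :: "complex \<Rightarrow> nat \<Rightarrow> complex" where
  "qint q k = (\<Sum>i<k. q ^ i)"

definition qfact :: "complex \<Rightarrow> nat \<Rightarrow> complex" where
  "qfact q k = (\<Prod>i=1..k. qint q i)"

definition compositions :: "nat \<Rightarrow> nat list set" where
  "compositions N = {ms. (\<forall>m\<in>set ms. 0 < m) \<and> sum_list ms = N}"

definition tvar :: "nat \<Rightarrow> (nat \<Rightarrow> complex) \<Rightarrow> nat \<Rightarrow> complex" where
  "tvar N w i = (\<Prod>j=1..N-i. w j) / (1 - (\<Prod>j=1..N-i. w j))"

definition Phi :: "nat \<Rightarrow> complex \<Rightarrow> (nat \<Rightarrow> complex) \<Rightarrow> complex" where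
  "Phi N q w = 1 / (1 - (\<Prod>j=1..N. w j)) *
     (\<Sum>ms\<in>compositions N.
        (1 / (\<Prod>m\<leftarrow>ms. qfact q m)) *
        (\<Prod>k<length ms - 1. tvar N w (sum_list (take (Suc k) ms))))"

definition Fsig :: "nat \<Rightarrow> complex \<Rightarrow> (nat \<Rightarrow> complex) \<Rightarrow> (nat \<Rightarrow> nat) \<Rightarrow> complex" where
  "Fsig N q z \<sigma> = Phi N q (\<lambda>i. z (\<sigma> i))"

end

theory Submission
  imports Defs "HOL-Combinatorics.Multiset_Permutations"
begin

text \<open>
  Put x_i = z_i / (1 - z_i) and r(a, b) = (x_a - q x_b) / (x_a - x_b). Then
  z_i - q z_j - (1 - q) z_i z_j = (x_i - x_j) r(i, j) (1 - z_i) (1 - z_j), and antisymmetrising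
  the Vandermonde factor reduces the theorem to the identity

    sum over all orderings L of the variables of  R(L) z_L \<Phi>(z_L)  =  prod_i x_i,

  where R(L) is the product of r over all pairs in the order of L and z_L is the product of the
  variables. Splitting off the first part of a composition gives a recursion for z_L \<Phi>(z_L) over
  the prefixes of L. Summed over orderings, this recursion closes up thanks to the symmetrisation
  identity  sum_L R(L) = [n]_q!  and the subset expansion
  sum_T (prod_{a in T} x_a) (prod_{a in T, b notin T} r(a, b)) = prod_a (1 + x_a), both consequences
  of the partial fraction expansion of prod_b (y - q x_b) / (y - x_b) in y. This proves the theorem
  for distinct nonzero z_i; since both sides are continuous in each variable separately, these
  restrictions can be removed one variable at a time.
\<close>

section \<open>Partial fractions of products of q-ratios\<close>

definition qratio :: "'a::field \<Rightarrow> ('i \<Rightarrow> 'a) \<Rightarrow> 'i \<Rightarrow> 'i \<Rightarrow> 'a" where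
  "qratio q x a b = (x a - q * x b) / (x a - x b)"

definition qratio_from :: "'a::field \<Rightarrow> ('i \<Rightarrow> 'a) \<Rightarrow> 'i set \<Rightarrow> 'i \<Rightarrow> 'a" where
  "qratio_from q x S a = (\<Prod>b\<in>S - {a}. qratio q x a b)"

definition qratio_to :: "'a::field \<Rightarrow> ('i \<Rightarrow> 'a) \<Rightarrow> 'i set \<Rightarrow> 'i \<Rightarrow> 'a" where
  "qratio_to q x S b = (\<Prod>a\<in>S - {b}. qratio q x a b)"

lemma qratio_from_insert:
  "finite S \<Longrightarrow> c \<notin> S \<Longrightarrow> a \<in> S \<Longrightarrow> qratio_from q x (insert c S) a = qratio_from q x S a * qratio q x a c"
  unfolding qratio_from_def by (subst insert_Diff_if) (auto simp: mult.commute)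

lemma qratio_from_insert_self: "c \<notin> S \<Longrightarrow> qratio_from q x (insert c S) c = (\<Prod>b\<in>S. qratio q x c b)"
  unfolding qratio_from_def by simp

lemma qratio_to_insert:
  "finite S \<Longrightarrow> c \<notin> S \<Longrightarrow> b \<in> S \<Longrightarrow> qratio_to q x (insert c S) b = qratio_to q x S b * qratio q x c b"
  unfolding qratio_to_def by (subst insert_Diff_if) (auto simp: mult.commute)

lemma qratio_to_insert_self: "c \<notin> S \<Longrightarrow> qratio_to q x (insert c S) c = (\<Prod>a\<in>S. qratio q x a c)"
  unfolding qratio_to_def by simp

lemma prod_qratio_partial_fractions_from:
  fixes x :: "'i \<Rightarrow> 'a::field"
  assumes "finite S" "inj_on x S" "y \<notin> x ` S"
  shows "(\<Prod>b\<in>S. (y - q * x b) / (y - x b)) = 1 - (1 - q) * (\<Sum>b\<in>S. qratio_from q x S b * x b / (x b - y))"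
  using assms
proof (induction S arbitrary: y rule: finite_induct)
  case empty
  then show ?case by simp
next
  case (insert c S)
  then have injS: "inj_on x S" and xc: "x c \<notin> x ` S" and yS: "y \<notin> x ` S" and yc: "y \<noteq> x c"
    by auto
  define Sy where "Sy = (\<Sum>b\<in>S. qratio_from q x S b * x b / (x b - y))"
  define Sc where "Sc = (\<Sum>b\<in>S. qratio_from q x S b * x b / (x b - x c))"
  have IHy: "(\<Prod>b\<in>S. (y - q * x b) / (y - x b)) = 1 - (1 - q) * Sy"
    using insert.IH[OF injS yS] unfolding Sy_def .
  \<comment> \<open>The hypothesis at the new pole \<open>y = x c\<close> gives the coefficient of \<open>1 / (x c - y)\<close>.\<close>
  have IHc: "qratio_from q x (insert c S) c = 1 - (1 - q) * Sc"
    using insert.IH[OF injS xc] insert.hyps(2) by (simp add: Sc_def qratio_from_insert_self qratio_def)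
  define \<alpha> where "\<alpha> = (y - q * x c) / (y - x c)"
  define \<beta> where "\<beta> = (1 - q) * x c / (x c - y)"
  have "qratio_from q x (insert c S) b * x b / (x b - y)
      = \<alpha> * (qratio_from q x S b * x b / (x b - y)) + \<beta> * (qratio_from q x S b * x b / (x b - x c))"
    if b: "b \<in> S" for b
  proof -
    have "x b - x c \<noteq> 0" "x b - y \<noteq> 0" using b xc yS by (metis image_eqI right_minus_eq)+
    then have partial: "qratio q x b c * x b / (x b - y) = \<alpha> * (x b / (x b - y)) + \<beta> * (x b / (x b - x c))"
      using yc by (simp add: qratio_def \<alpha>_def \<beta>_def divide_simps) (simp add: algebra_simps)
    have "qratio_from q x (insert c S) b * x b / (x b - y) = qratio_from q x S b * (qratio q x b c * x b / (x b - y))"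
      unfolding qratio_from_insert[OF insert.hyps b] by simp
    also have "\<dots> = qratio_from q x S b * (\<alpha> * (x b / (x b - y)) + \<beta> * (x b / (x b - x c)))"
      by (simp only: partial)
    finally show ?thesis by (simp add: algebra_simps)
  qed
  then have "(\<Sum>b\<in>insert c S. qratio_from q x (insert c S) b * x b / (x b - y))
      = \<alpha> * Sy + \<beta> * Sc + (1 - (1 - q) * Sc) * x c / (x c - y)"
    using insert.hyps IHc by (simp add: Sy_def Sc_def sum.distrib sum_distrib_left)
  moreover have "(\<Prod>b\<in>insert c S. (y - q * x b) / (y - x b)) = \<alpha> * (1 - (1 - q) * Sy)"
    using insert.hyps IHy by (simp add: \<alpha>_def)
  moreover have "\<alpha> * (1 - (1 - q) * Sy) = 1 - (1 - q) * (\<alpha> * Sy + \<beta> * Sc + (1 - (1 - q) * Sc) * x c / (x c - y))"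
    using yc by (simp add: \<alpha>_def \<beta>_def divide_simps) (simp add: algebra_simps)
  ultimately show ?case by simp
qed

lemma prod_qratio_partial_fractions_to:
  fixes x :: "'i \<Rightarrow> 'a::field"
  assumes "finite S" "inj_on x S" "y \<notin> x ` S"
  shows "(\<Prod>a\<in>S. (x a - q * y) / (x a - y)) = 1 + (1 - q) * y * (\<Sum>a\<in>S. qratio_to q x S a / (x a - y))"
  using assms
proof (induction S arbitrary: y rule: finite_induct)
  case empty
  then show ?case by simp
next
  case (insert c S)
  then have injS: "inj_on x S" and xc: "x c \<notin> x ` S" and yS: "y \<notin> x ` S" and yc: "y \<noteq> x c"
    by auto
  define Ty where "Ty = (\<Sum>a\<in>S. qratio_to q x S a / (x a - y))"
  define Tc where "Tc = (\<Sum>a\<in>S. qratio_to q x S a / (x a - x c))"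
  have IHy: "(\<Prod>a\<in>S. (x a - q * y) / (x a - y)) = 1 + (1 - q) * y * Ty"
    using insert.IH[OF injS yS] unfolding Ty_def .
  have IHc: "qratio_to q x (insert c S) c = 1 + (1 - q) * x c * Tc"
    using insert.IH[OF injS xc] insert.hyps(2) by (simp add: Tc_def qratio_to_insert_self qratio_def)
  define \<alpha> where "\<alpha> = (x c - q * y) / (x c - y)"
  define \<beta> where "\<beta> = - (1 - q) * x c / (x c - y)"
  have "qratio_to q x (insert c S) a / (x a - y)
      = \<alpha> * (qratio_to q x S a / (x a - y)) + \<beta> * (qratio_to q x S a / (x a - x c))"
    if a: "a \<in> S" for a
  proof -
    have "x a - x c \<noteq> 0" "x a - y \<noteq> 0" using a xc yS by (metis image_eqI right_minus_eq)+
    then have partial: "qratio q x c a / (x a - y) = \<alpha> * (1 / (x a - y)) + \<beta> * (1 / (x a - x c))"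
      using yc by (simp add: qratio_def \<alpha>_def \<beta>_def divide_simps) (simp add: algebra_simps)
    have "qratio_to q x (insert c S) a / (x a - y) = qratio_to q x S a * (qratio q x c a / (x a - y))"
      unfolding qratio_to_insert[OF insert.hyps a] by simp
    also have "\<dots> = qratio_to q x S a * (\<alpha> * (1 / (x a - y)) + \<beta> * (1 / (x a - x c)))"
      by (simp only: partial)
    finally show ?thesis by (simp add: algebra_simps)
  qed
  then have "(\<Sum>a\<in>insert c S. qratio_to q x (insert c S) a / (x a - y))
      = \<alpha> * Ty + \<beta> * Tc + (1 + (1 - q) * x c * Tc) / (x c - y)"
    using insert.hyps IHc by (simp add: Ty_def Tc_def sum.distrib sum_distrib_left)
  moreover have "(\<Prod>a\<in>insert c S. (x a - q * y) / (x a - y)) = \<alpha> * (1 + (1 - q) * y * Ty)"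
    using insert.hyps IHy by (simp add: \<alpha>_def)
  moreover have "\<alpha> * (1 + (1 - q) * y * Ty) = 1 + (1 - q) * y * (\<alpha> * Ty + \<beta> * Tc + (1 + (1 - q) * x c * Tc) / (x c - y))"
    using yc by (simp add: \<alpha>_def \<beta>_def divide_simps) (simp add: algebra_simps)
  ultimately show ?case by simp
qed

lemma sum_qratio_from:
  fixes x :: "'i \<Rightarrow> 'a::field"
  assumes "finite S" "inj_on x S"
  shows "(\<Sum>a\<in>S. qratio_from q x S a) = (\<Sum>i<card S. q ^ i)"
  using assms
proof (induction S rule: finite_induct)
  case empty
  then show ?case by simp
next
  case (insert c S)
  then have injS: "inj_on x S" and xc: "x c \<notin> x ` S" by auto
  define Sc where "Sc = (\<Sum>b\<in>S. qratio_from q x S b * x b / (x b - x c))"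
  have self: "qratio_from q x (insert c S) c = 1 - (1 - q) * Sc"
    using prod_qratio_partial_fractions_from[OF insert.hyps(1) injS xc] insert.hyps(2)
    by (simp add: Sc_def qratio_from_insert_self qratio_def)
  have "qratio_from q x (insert c S) a = q * qratio_from q x S a + (1 - q) * (qratio_from q x S a * x a / (x a - x c))"
    if a: "a \<in> S" for a
  proof -
    have "x a - x c \<noteq> 0" using a xc by (metis image_eqI right_minus_eq)
    then have "qratio q x a c = q + (1 - q) * (x a / (x a - x c))"
      by (simp add: qratio_def divide_simps) (simp add: algebra_simps)
    then show ?thesis
      unfolding qratio_from_insert[OF insert.hyps a] by (simp add: algebra_simps)
  qed
  then have "(\<Sum>a\<in>insert c S. qratio_from q x (insert c S) a) = q * (\<Sum>a\<in>S. qratio_from q x S a) + 1"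
    using insert.hyps self by (simp add: Sc_def sum.distrib sum_distrib_left)
  also have "\<dots> = (\<Sum>i<card (insert c S). q ^ i)"
    using insert.hyps insert.IH[OF injS] by (simp add: sum.lessThan_Suc_shift sum_distrib_left del: sum.lessThan_Suc)
  finally show ?case .
qed

definition qratio_cut :: "'a::field \<Rightarrow> ('i \<Rightarrow> 'a) \<Rightarrow> 'i set \<Rightarrow> 'i set \<Rightarrow> 'a" where
  "qratio_cut q x S T = (\<Prod>a\<in>T. \<Prod>b\<in>S - T. qratio q x a b)"

lemma qratio_cut_insert_outside:
  assumes "finite S" "c \<notin> S" "T \<subseteq> S"
  shows "qratio_cut q x (insert c S) T = qratio_cut q x S T * (\<Prod>a\<in>T. qratio q x a c)"
proof -
  have "insert c S - T = insert c (S - T)" "finite (S - T)" "c \<notin> S - T"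
    using assms by auto
  then show ?thesis unfolding qratio_cut_def by (simp add: prod.distrib)
qed

lemma qratio_cut_insert_inside:
  assumes "finite S" "c \<notin> S" "T \<subseteq> S"
  shows "qratio_cut q x (insert c S) (insert c T) = qratio_cut q x S T * (\<Prod>b\<in>S - T. qratio q x c b)"
proof -
  have "insert c S - insert c T = S - T" "finite T" "c \<notin> T"
    using assms finite_subset by auto
  then show ?thesis unfolding qratio_cut_def by (simp add: mult.commute)
qed

lemma qratio_cut_move:
  assumes "finite S" "T \<subseteq> S" "b \<in> S - T"
  shows "qratio_cut q x S (insert b T) * qratio_to q x (insert b T) b = qratio_cut q x S T * qratio_from q x (S - T) b"
proof -
  have T: "finite T" "b \<notin> T" using assms finite_subset by auto
  have "S - insert b T = (S - T) - {b}" by auto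
  then have "qratio_cut q x S (insert b T)
      = qratio_from q x (S - T) b * (\<Prod>a\<in>T. \<Prod>b'\<in>(S - T) - {b}. qratio q x a b')"
    unfolding qratio_cut_def qratio_from_def using T by simp
  moreover have "qratio_to q x (insert b T) b = (\<Prod>a\<in>T. qratio q x a b)"
    unfolding qratio_to_def using T by simp
  moreover have "qratio_cut q x S T = (\<Prod>a\<in>T. qratio q x a b * (\<Prod>b'\<in>(S - T) - {b}. qratio q x a b'))"
    unfolding qratio_cut_def using assms by (intro prod.cong refl prod.remove) auto
  ultimately show ?thesis by (simp add: prod.distrib mult_ac)
qed

lemma sum_Pow_members:
  assumes "finite S"
  shows "(\<Sum>T\<in>Pow S. \<Sum>a\<in>T. g T a) = (\<Sum>T\<in>Pow S. \<Sum>b\<in>S - T. g (insert b T) b)"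
proof -
  have fin: "finite T" if "T \<in> Pow S" for T using assms that finite_subset by auto
  have "(\<Sum>T\<in>Pow S. \<Sum>b\<in>S - T. g (insert b T) b) = (\<Sum>(T, b)\<in>Sigma (Pow S) (\<lambda>T. S - T). g (insert b T) b)"
    using assms by (subst sum.Sigma) auto
  also have "\<dots> = (\<Sum>(T, a)\<in>Sigma (Pow S) (\<lambda>T. T). g T a)"
    by (rule sum.reindex_bij_witness[where i = "\<lambda>(T, a). (T - {a}, a)" and j = "\<lambda>(T, b). (insert b T, b)"])
      (auto simp: insert_absorb)
  also have "\<dots> = (\<Sum>T\<in>Pow S. \<Sum>a\<in>T. g T a)"
    using assms fin by (subst sum.Sigma) auto
  finally show ?thesis ..
qed

lemma sum_Pow_qratio_cut_exchange:
  fixes x :: "'i \<Rightarrow> 'a::field"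
  assumes "finite S"
  shows "(\<Sum>T\<in>Pow S. (\<Prod>a\<in>T. x a) * qratio_cut q x S T * (\<Sum>a\<in>T. qratio_to q x T a / (x a - y)))
    = (\<Sum>T\<in>Pow S. (\<Prod>a\<in>T. x a) * qratio_cut q x S T * (\<Sum>b\<in>S - T. qratio_from q x (S - T) b * x b / (x b - y)))"
proof -
  define F where "F T = (\<Prod>a\<in>T. x a) * qratio_cut q x S T" for T
  have "(\<Sum>T\<in>Pow S. F T * (\<Sum>a\<in>T. qratio_to q x T a / (x a - y)))
      = (\<Sum>T\<in>Pow S. \<Sum>b\<in>S - T. F (insert b T) * qratio_to q x (insert b T) b / (x b - y))"
    unfolding sum_distrib_left times_divide_eq_right by (rule sum_Pow_members[OF assms])
  also have "\<dots> = (\<Sum>T\<in>Pow S. \<Sum>b\<in>S - T. F T * (qratio_from q x (S - T) b * x b / (x b - y)))"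
  proof (intro sum.cong refl)
    fix T b assume T: "T \<in> Pow S" and b: "b \<in> S - T"
    have "finite T" using T assms finite_subset by auto
    then have "(\<Prod>a\<in>insert b T. x a) = x b * (\<Prod>a\<in>T. x a)" using b by simp
    then show "F (insert b T) * qratio_to q x (insert b T) b / (x b - y)
        = F T * (qratio_from q x (S - T) b * x b / (x b - y))"
      using qratio_cut_move[OF assms _ b, of q x] T by (simp add: F_def mult_ac)
  qed
  finally show ?thesis
    by (simp add: F_def sum_distrib_left)
qed

lemma sum_Pow_prod_qratio_cut:
  fixes x :: "'i \<Rightarrow> 'a::field"
  assumes "finite S" "inj_on x S"
  shows "(\<Sum>T\<in>Pow S. (\<Prod>a\<in>T. x a) * qratio_cut q x S T) = (\<Prod>a\<in>S. 1 + x a)"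
  using assms
proof (induction S rule: finite_induct)
  case empty
  then show ?case by (simp add: qratio_cut_def)
next
  case (insert c S)
  then have injS: "inj_on x S" and xc: "x c \<notin> x ` S" by auto
  define F where "F T = (\<Prod>a\<in>T. x a) * qratio_cut q x S T" for T
  define A where "A T = (\<Sum>a\<in>T. qratio_to q x T a / (x a - x c))" for T
  define B where "B U = (\<Sum>b\<in>U. qratio_from q x U b * x b / (x b - x c))" for U
  have sub: "finite T" "inj_on x T" "x c \<notin> x ` T" if "T \<subseteq> S" for T
    using that insert.hyps(1) injS xc finite_subset inj_on_subset by blast+
  have outside: "(\<Prod>a\<in>T. x a) * qratio_cut q x (insert c S) T = F T + (1 - q) * x c * (F T * A T)"
    if "T \<subseteq> S" for T
  proof -
    have P: "(\<Prod>a\<in>T. qratio q x a c) = 1 + (1 - q) * x c * A T"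
      using prod_qratio_partial_fractions_to[OF sub[OF that], of q] by (simp add: A_def qratio_def)
    have "(\<Prod>a\<in>T. x a) * qratio_cut q x (insert c S) T = F T * (\<Prod>a\<in>T. qratio q x a c)"
      using that by (simp add: qratio_cut_insert_outside[OF insert.hyps] F_def)
    then show ?thesis by (simp only: P) (simp add: algebra_simps)
  qed
  have inside: "(\<Prod>a\<in>insert c T. x a) * qratio_cut q x (insert c S) (insert c T)
      = x c * F T - (1 - q) * x c * (F T * B (S - T))" if "T \<subseteq> S" for T
  proof -
    have P: "(\<Prod>b\<in>S - T. qratio q x c b) = 1 - (1 - q) * B (S - T)"
      using prod_qratio_partial_fractions_from[OF sub[of "S - T"], of q] by (simp add: B_def qratio_def)
    have "(\<Prod>a\<in>insert c T. x a) = x c * (\<Prod>a\<in>T. x a)"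
      using that insert.hyps finite_subset by (subst prod.insert) auto
    then have "(\<Prod>a\<in>insert c T. x a) * qratio_cut q x (insert c S) (insert c T)
        = x c * F T * (\<Prod>b\<in>S - T. qratio q x c b)"
      using that by (simp add: qratio_cut_insert_inside[OF insert.hyps] F_def)
    then show ?thesis by (simp only: P) (simp add: algebra_simps)
  qed
  have exchange: "(\<Sum>T\<in>Pow S. F T * A T) = (\<Sum>T\<in>Pow S. F T * B (S - T))"
    using sum_Pow_qratio_cut_exchange[OF insert.hyps(1), of x q "x c"] by (simp add: F_def A_def B_def)
  have "inj_on (insert c) (Pow S)" "Pow S \<inter> insert c ` Pow S = {}"
    using insert.hyps by (auto simp: inj_on_def)
  then have "(\<Sum>T\<in>Pow (insert c S). (\<Prod>a\<in>T. x a) * qratio_cut q x (insert c S) T)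
      = (\<Sum>T\<in>Pow S. (\<Prod>a\<in>T. x a) * qratio_cut q x (insert c S) T)
        + (\<Sum>T\<in>Pow S. (\<Prod>a\<in>insert c T. x a) * qratio_cut q x (insert c S) (insert c T))"
    unfolding Pow_insert using insert.hyps by (simp add: sum.union_disjoint sum.reindex)
  also have "\<dots> = (1 + x c) * (\<Sum>T\<in>Pow S. F T)
      + (1 - q) * x c * ((\<Sum>T\<in>Pow S. F T * A T) - (\<Sum>T\<in>Pow S. F T * B (S - T)))"
    by (simp add: outside inside sum.distrib sum_subtractf sum_distrib_left algebra_simps)
  also have "\<dots> = (\<Prod>a\<in>insert c S. 1 + x a)"
    using exchange insert.IH[OF injS] insert.hyps by (simp add: F_def)
  finally show ?case .
qed

section \<open>Sums over orderings\<close>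

fun qratio_list :: "'a::field \<Rightarrow> ('i \<Rightarrow> 'a) \<Rightarrow> 'i list \<Rightarrow> 'a" where
  "qratio_list q x [] = 1"
| "qratio_list q x (a # L) = (\<Prod>b\<leftarrow>L. qratio q x a b) * qratio_list q x L"

lemma qratio_list_append:
  "qratio_list q x (L1 @ L2) = qratio_list q x L1 * qratio_list q x L2 * (\<Prod>a\<leftarrow>L1. \<Prod>b\<leftarrow>L2. qratio q x a b)"
  by (induction L1) (auto simp: mult_ac)

lemma qratio_list_append_permutations:
  assumes "L1 \<in> permutations_of_set T" "L2 \<in> permutations_of_set (S - T)"
  shows "qratio_list q x (L1 @ L2) = qratio_list q x L1 * qratio_list q x L2 * qratio_cut q x S T"
proof -
  have L: "distinct L1" "set L1 = T" "distinct L2" "set L2 = S - T"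
    using assms by (auto simp: permutations_of_set_def)
  then have "(\<Prod>b\<leftarrow>L2. qratio q x a b) = (\<Prod>b\<in>S - T. qratio q x a b)" for a
    by (metis prod.distinct_set_conv_list)
  then have "(\<Prod>a\<leftarrow>L1. \<Prod>b\<leftarrow>L2. qratio q x a b) = qratio_cut q x S T"
    using L by (simp add: qratio_cut_def flip: prod.distinct_set_conv_list)
  then show ?thesis by (simp add: qratio_list_append)
qed

lemma qratio_list_map_upt:
  "qratio_list q x (map g [m..<n]) = (\<Prod>i\<in>{m..<n}. \<Prod>j\<in>{i<..<n}. qratio q x (g i) (g j))"
proof (induction "n - m" arbitrary: m)
  case (Suc k)
  then have m: "m < n" by simp
  have "{m<..<n} = set [Suc m..<n]" by auto
  then have "(\<Prod>b\<leftarrow>map g [Suc m..<n]. qratio q x (g m) b) = (\<Prod>j\<in>{m<..<n}. qratio q x (g m) (g j))"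
    by (simp only: prod.distinct_set_conv_list distinct_upt map_map comp_def)
  moreover have "[m..<n] = m # [Suc m..<n]" "{m..<n} = insert m {Suc m..<n}"
    using m by (auto simp: upt_rec)
  ultimately show ?case
    using Suc.hyps(1)[of "Suc m"] Suc.hyps(2) by simp
qed simp

lemma sum_permutations_of_set_Cons:
  assumes "finite S" "S \<noteq> {}"
  shows "(\<Sum>L\<in>permutations_of_set S. f L) = (\<Sum>a\<in>S. \<Sum>L\<in>permutations_of_set (S - {a}). f (a # L))"
proof -
  have "permutations_of_set S = (\<lambda>(a, L). a # L) ` Sigma S (\<lambda>a. permutations_of_set (S - {a}))"
    unfolding permutations_of_set_nonempty[OF assms(2)] by auto
  moreover have "inj_on (\<lambda>(a, L). a # L) (Sigma S (\<lambda>a. permutations_of_set (S - {a})))"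
    by (auto simp: inj_on_def)
  ultimately show ?thesis
    using assms by (simp add: sum.reindex sum.Sigma split_def)
qed

lemma sum_permutations_of_set_append:
  assumes "finite S" "i \<le> card S"
  shows "(\<Sum>L\<in>permutations_of_set S. f L) =
    (\<Sum>T | T \<subseteq> S \<and> card T = i. \<Sum>L1\<in>permutations_of_set T. \<Sum>L2\<in>permutations_of_set (S - T). f (L1 @ L2))"
proof -
  let ?P = "Sigma {T. T \<subseteq> S \<and> card T = i} (\<lambda>T. permutations_of_set T \<times> permutations_of_set (S - T))"
  have "(\<Sum>L\<in>permutations_of_set S. f L) = (\<Sum>(T, L1, L2)\<in>?P. f (L1 @ L2))"
  proof (rule sum.reindex_bij_witness[where i = "\<lambda>(T, L1, L2). L1 @ L2" and j = "\<lambda>L. (set (take i L), take i L, drop i L)"])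
    fix p assume "p \<in> ?P"
    then obtain T L1 L2 where p: "p = (T, L1, L2)" "T \<subseteq> S" "card T = i"
      "L1 \<in> permutations_of_set T" "L2 \<in> permutations_of_set (S - T)"
      by auto
    then have "length L1 = i" "set L1 \<inter> set L2 = {}" "set L1 \<union> set L2 = S"
      by (auto simp: permutations_of_set_def distinct_card)
    with p show "(\<lambda>L. (set (take i L), take i L, drop i L)) ((\<lambda>(T, L1, L2). L1 @ L2) p) = p"
      "(\<lambda>(T, L1, L2). L1 @ L2) p \<in> permutations_of_set S"
      by (auto simp: permutations_of_set_def)
  next
    fix L assume "L \<in> permutations_of_set S"
    then have L: "distinct L" "set L = S" "length L = card S"
      by (auto simp: permutations_of_set_def distinct_card)
    have "set (take i L) \<union> set (drop i L) = S" "set (take i L) \<inter> set (drop i L) = {}"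
      using L by (metis set_append append_take_drop_id, metis distinct_append append_take_drop_id)
    moreover have "card (set (take i L)) = i"
      using L assms by (simp add: distinct_card)
    ultimately show "(\<lambda>L. (set (take i L), take i L, drop i L)) L \<in> ?P"
      using L by (auto simp: permutations_of_set_def)
  qed auto
  also have "\<dots> = (\<Sum>T | T \<subseteq> S \<and> card T = i. \<Sum>L1\<in>permutations_of_set T. \<Sum>L2\<in>permutations_of_set (S - T). f (L1 @ L2))"
    using assms by (simp add: sum.Sigma sum.cartesian_product split_def)
  finally show ?thesis .
qed

lemma sum_permutations_qratio_list:
  fixes x :: "'i \<Rightarrow> 'a::field"
  assumes "finite S" "inj_on x S"
  shows "(\<Sum>L\<in>permutations_of_set S. qratio_list q x L) = (\<Prod>k=1..card S. \<Sum>i<k. q ^ i)"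
  using assms
proof (induction "card S" arbitrary: S)
  case 0
  then show ?case by simp
next
  case (Suc n)
  then have S: "S \<noteq> {}" by auto
  have "(\<Sum>L\<in>permutations_of_set (S - {a}). qratio_list q x (a # L))
      = qratio_from q x S a * (\<Prod>k=1..n. \<Sum>i<k. q ^ i)" if a: "a \<in> S" for a
  proof -
    have "(\<Sum>L\<in>permutations_of_set (S - {a}). qratio_list q x L) = (\<Prod>k=1..n. \<Sum>i<k. q ^ i)"
      using Suc.hyps(1)[of "S - {a}"] Suc.hyps(2) Suc.prems a inj_on_subset[OF Suc.prems(2)]
      by (metis Diff_subset card_Diff_singleton diff_Suc_1 finite_Diff)
    moreover have "(\<Prod>b\<leftarrow>L. qratio q x a b) = qratio_from q x S a" if "L \<in> permutations_of_set (S - {a})" for L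
      using that by (auto simp: qratio_from_def permutations_of_set_def simp flip: prod.distinct_set_conv_list)
    ultimately show ?thesis by (simp add: sum_distrib_left[symmetric])
  qed
  then have "(\<Sum>L\<in>permutations_of_set S. qratio_list q x L) = (\<Sum>a\<in>S. qratio_from q x S a) * (\<Prod>k=1..n. \<Sum>i<k. q ^ i)"
    by (simp add: sum_permutations_of_set_Cons[OF Suc.prems(1) S] sum_distrib_right)
  also have "\<dots> = (\<Prod>k=1..Suc n. \<Sum>i<k. q ^ i)"
    using sum_qratio_from[OF Suc.prems] by (simp add: Suc.hyps(2)[symmetric] prod.nat_ivl_Suc' mult.commute)
  finally show ?case using Suc.hyps(2) by simp
qed

lemma sum_permutations_prefix:
  fixes x :: "'i \<Rightarrow> 'a::field"
  assumes "finite S" "inj_on x S" "i \<le> card S"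
    and prefix: "\<And>T. T \<subseteq> S \<Longrightarrow> card T = i \<Longrightarrow> (\<Sum>L\<in>permutations_of_set T. qratio_list q x L * g L) = (\<Prod>a\<in>T. x a)"
  shows "(\<Sum>L\<in>permutations_of_set S. qratio_list q x L * g (take i L))
    = (\<Sum>T | T \<subseteq> S \<and> card T = i. (\<Prod>a\<in>T. x a) * qratio_cut q x S T) * (\<Prod>k=1..card S - i. \<Sum>j<k. q ^ j)"
proof -
  have "(\<Sum>L1\<in>permutations_of_set T. \<Sum>L2\<in>permutations_of_set (S - T). qratio_list q x (L1 @ L2) * g (take i (L1 @ L2)))
      = (\<Prod>a\<in>T. x a) * qratio_cut q x S T * (\<Prod>k=1..card S - i. \<Sum>j<k. q ^ j)"
    if T: "T \<subseteq> S" "card T = i" for T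
  proof -
    have "take i (L1 @ L2) = L1" if "L1 \<in> permutations_of_set T" for L1 L2
      using that T by (simp add: length_finite_permutations_of_set)
    then have "(\<Sum>L1\<in>permutations_of_set T. \<Sum>L2\<in>permutations_of_set (S - T). qratio_list q x (L1 @ L2) * g (take i (L1 @ L2)))
        = qratio_cut q x S T * (\<Sum>L1\<in>permutations_of_set T. qratio_list q x L1 * g L1)
            * (\<Sum>L2\<in>permutations_of_set (S - T). qratio_list q x L2)"
      by (simp add: qratio_list_append_permutations sum_distrib_left sum_distrib_right mult_ac)
    moreover have "(\<Sum>L2\<in>permutations_of_set (S - T). qratio_list q x L2) = (\<Prod>k=1..card S - i. \<Sum>j<k. q ^ j)"
      using sum_permutations_qratio_list[of "S - T" x q] assms(1) T inj_on_subset[OF assms(2), of "S - T"]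
      by (simp add: card_Diff_subset finite_subset)
    ultimately show ?thesis using prefix[OF T] by simp
  qed
  then show ?thesis
    by (simp add: sum_permutations_of_set_append[OF assms(1,3)] sum_distrib_right)
qed

lemma sum_subsets_by_card:
  assumes "finite S"
  shows "(\<Sum>i<card S. \<Sum>T | T \<subseteq> S \<and> card T = i. g T) = (\<Sum>T\<in>Pow S - {S}. g T)"
proof -
  have "Pow S - {S} = (\<Union>i<card S. {T. T \<subseteq> S \<and> card T = i})"
    using assms by (auto dest: psubset_card_mono)
  moreover have "sum g (\<Union>i<card S. {T. T \<subseteq> S \<and> card T = i}) = (\<Sum>i<card S. \<Sum>T | T \<subseteq> S \<and> card T = i. g T)"
    using assms by (subst sum.UNION_disjoint) auto
  ultimately show ?thesis by simp
qed

section \<open>The composition sum\<close>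

lemma finite_compositions: "finite (compositions k)"
proof (rule finite_subset)
  have "length ms \<le> sum_list ms" if "\<forall>m\<in>set ms. 0 < (m::nat)" for ms
    using that by (induction ms) auto
  then show "compositions k \<subseteq> {ms. set ms \<subseteq> {..k} \<and> length ms \<le> k}"
    by (auto simp: compositions_def member_le_sum_list)
qed (simp add: finite_lists_length_le)

lemma compositions_0 [simp]: "compositions 0 = {[]}"
  unfolding compositions_def by (auto simp: neq_Nil_conv) (metis neq_Nil_conv list.set_intros(1) less_irrefl)

lemma sum_compositions_Cons:
  assumes "k \<noteq> 0"
  shows "(\<Sum>ms\<in>compositions k. g ms) = (\<Sum>m=1..k. \<Sum>ms\<in>compositions (k - m). g (m # ms))"
proof -
  have "compositions k = (\<lambda>(m, ms). m # ms) ` Sigma {1..k} (\<lambda>m. compositions (k - m))"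
  proof safe
    fix ms assume ms: "ms \<in> compositions k"
    with assms obtain m ms' where "ms = m # ms'" by (cases ms) (auto simp: compositions_def)
    with ms show "ms \<in> (\<lambda>(m, ms). m # ms) ` Sigma {1..k} (\<lambda>m. compositions (k - m))"
      by (force simp: compositions_def)
  qed (auto simp: compositions_def)
  moreover have "inj_on (\<lambda>(m, ms). m # ms) (Sigma {1..k} (\<lambda>m. compositions (k - m)))"
    by (auto simp: inj_on_def)
  ultimately show ?thesis
    by (simp add: sum.reindex sum.Sigma finite_compositions split_def)
qed

definition tfrac :: "complex list \<Rightarrow> complex" where
  "tfrac ws = prod_list ws / (1 - prod_list ws)"

text \<open>The summand of \<open>\<Phi>\<close> for the composition \<open>ms\<close>, with \<open>t\<^sub>i\<close> evaluated on the first
  \<open>length ws - i\<close> entries of \<open>ws\<close>; see \<open>Phi_eq_composition_sum\<close>.\<close>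

definition composition_term :: "complex \<Rightarrow> complex list \<Rightarrow> nat list \<Rightarrow> complex" where
  "composition_term q ws ms =
     (\<Prod>j<length ms - 1. tfrac (take (length ws - sum_list (take (Suc j) ms)) ws)) / (\<Prod>m\<leftarrow>ms. qfact q m)"

definition composition_sum :: "complex \<Rightarrow> complex list \<Rightarrow> complex" where
  "composition_sum q ws = (\<Sum>ms\<in>compositions (length ws). composition_term q ws ms)"

text \<open>\<open>phi_weight q ws\<close> is \<open>(\<Prod>ws) \<Phi>(ws)\<close>; its value \<open>1\<close> at the empty list makes the recursion
  \<open>composition_sum_rec\<close> uniform in the length of the prefix.\<close>

definition phi_weight :: "complex \<Rightarrow> complex list \<Rightarrow> complex" where
  "phi_weight q ws = (if ws = [] then 1 else tfrac ws * composition_sum q ws)"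

lemma Phi_eq_composition_sum:
  "Phi N q w = composition_sum q (map w [1..<Suc N]) / (1 - (\<Prod>j=1..N. w j))"
proof -
  have "prod_list (take k (map w [1..<Suc N])) = (\<Prod>j=1..k. w j)" if "k \<le> N" for k
    using that by (simp add: take_map prod.distinct_set_conv_list[symmetric] atLeastLessThanSuc_atLeastAtMost
      del: upt_Suc)
  then have "tvar N w s = tfrac (take (N - s) (map w [1..<Suc N]))" for s
    unfolding tvar_def tfrac_def by simp
  then show ?thesis
    unfolding Phi_def composition_sum_def composition_term_def
    by (simp add: sum_divide_distrib)
qed

lemma Phi_mult_prod_eq_phi_weight:
  assumes "N \<noteq> 0"
  shows "Phi N q w * (\<Prod>j=1..N. w j) = phi_weight q (map w [1..<Suc N])"
proof -
  have "prod_list (map w [1..<Suc N]) = (\<Prod>j=1..N. w j)"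
    by (simp add: prod.distinct_set_conv_list[symmetric] atLeastLessThanSuc_atLeastAtMost del: upt_Suc)
  then show ?thesis
    using assms by (simp add: Phi_eq_composition_sum phi_weight_def tfrac_def)
qed

lemma composition_term_Cons:
  assumes "ms \<noteq> []"
  shows "composition_term q ws (m # ms)
    = tfrac (take (length ws - m) ws) / qfact q m * composition_term q (take (length ws - m) ws) ms"
proof -
  obtain n where n: "length ms = Suc n" using assms by (cases ms) auto
  have "(\<Prod>j<length (m # ms) - 1. tfrac (take (length ws - sum_list (take (Suc j) (m # ms))) ws))
      = tfrac (take (length ws - m) ws)
        * (\<Prod>j<length ms - 1. tfrac (take (length (take (length ws - m) ws) - sum_list (take (Suc j) ms)) (take (length ws - m) ws)))"
    using n by (simp add: prod.lessThan_Suc_shift min_absorb1 diff_diff_left del: prod.lessThan_Suc)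
  then show ?thesis
    by (simp add: composition_term_def)
qed

lemma composition_sum_rec:
  assumes "ws \<noteq> []"
  shows "composition_sum q ws = (\<Sum>i<length ws. phi_weight q (take i ws) / qfact q (length ws - i))"
proof -
  define k where "k = length ws"
  have k: "k \<noteq> 0" using assms by (simp add: k_def)
  have "(\<Sum>ms\<in>compositions (k - m). composition_term q ws (m # ms)) = phi_weight q (take (k - m) ws) / qfact q m"
    if m: "m \<in> {1..k}" for m
  proof (cases "m = k")
    case True
    then show ?thesis by (simp add: composition_term_def phi_weight_def)
  next
    case False
    then have "ms \<noteq> []" if "ms \<in> compositions (k - m)" for ms
      using that m by (auto simp: compositions_def)
    moreover have "take (k - m) ws \<noteq> []" using False m k by (simp add: k_def)
    ultimately show ?thesis
      by (simp add: composition_term_Cons composition_sum_def phi_weight_def sum_distrib_left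
          sum_divide_distrib k_def flip: k_def)
  qed
  then have "composition_sum q ws = (\<Sum>m=1..k. phi_weight q (take (k - m) ws) / qfact q m)"
    using k by (simp add: composition_sum_def sum_compositions_Cons k_def[symmetric])
  also have "\<dots> = (\<Sum>i<k. phi_weight q (take i ws) / qfact q (k - i))"
    by (rule sum.reindex_bij_witness[where i = "\<lambda>i. k - i" and j = "\<lambda>m. k - m"]) (use k in auto)
  finally show ?thesis by (simp add: k_def)
qed

lemma phi_weight_permutation:
  assumes "L \<in> permutations_of_set S" "finite S" "S \<noteq> {}"
  shows "phi_weight q (map z L) = (\<Prod>a\<in>S. z a) / (1 - (\<Prod>a\<in>S. z a))
    * (\<Sum>i<card S. phi_weight q (map z (take i L)) / qfact q (card S - i))"
proof -
  have "L \<noteq> []" "length L = card S" "prod_list (map z L) = (\<Prod>a\<in>S. z a)"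
    using assms by (auto simp: length_finite_permutations_of_set permutations_of_set_def prod.distinct_set_conv_list)
  then show ?thesis
    by (simp add: phi_weight_def composition_sum_rec tfrac_def take_map)
qed

lemma qfact_eq_prod_sum: "qfact q n = (\<Prod>k=1..n. \<Sum>i<k. q ^ i)"
  by (simp add: qfact_def qint_def)

lemma norm_prod_less_one:
  fixes z :: "'i \<Rightarrow> 'a::real_normed_field"
  assumes "finite S" "S \<noteq> {}" "\<forall>a\<in>S. norm (z a) < 1"
  shows "norm (\<Prod>a\<in>S. z a) < 1"
  using assms
proof (induction S rule: finite_ne_induct)
  case (insert a S)
  then have "norm (\<Prod>a\<in>insert a S. z a) \<le> norm (z a)"
    by (simp add: norm_mult mult_left_le)
  then show ?case using insert by auto
qed simp

lemma prod_moebius_complement: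
  fixes z :: "'i \<Rightarrow> 'a::field"
  assumes "finite S" "\<forall>a\<in>S. z a \<noteq> 1" "(\<Prod>a\<in>S. z a) \<noteq> 1"
  shows "(\<Prod>a\<in>S. z a) / (1 - (\<Prod>a\<in>S. z a)) * ((\<Prod>a\<in>S. 1 + z a / (1 - z a)) - (\<Prod>a\<in>S. z a / (1 - z a)))
    = (\<Prod>a\<in>S. z a / (1 - z a))"
proof -
  have z1: "1 - z a \<noteq> 0" if "a \<in> S" for a using assms(2) that by auto
  then have "(\<Prod>a\<in>S. 1 + z a / (1 - z a)) = 1 / (\<Prod>a\<in>S. 1 - z a)"
    "(\<Prod>a\<in>S. z a / (1 - z a)) = (\<Prod>a\<in>S. z a) / (\<Prod>a\<in>S. 1 - z a)"
    by (simp_all add: prod_dividef field_simps cong: prod.cong)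
  moreover have "(\<Prod>a\<in>S. 1 - z a) \<noteq> 0" "1 - (\<Prod>a\<in>S. z a) \<noteq> 0"
    using z1 assms(1,3) by auto
  ultimately show ?thesis by (simp only:) (simp add: field_simps)
qed

lemma sum_permutations_qratio_list_phi_weight:
  fixes z :: "'i \<Rightarrow> complex"
  assumes "finite S" "inj_on (\<lambda>a. z a / (1 - z a)) S" "\<forall>a\<in>S. norm (z a) < 1" "\<forall>m\<le>card S. qfact q m \<noteq> 0"
  shows "(\<Sum>L\<in>permutations_of_set S. qratio_list q (\<lambda>a. z a / (1 - z a)) L * phi_weight q (map z L))
    = (\<Prod>a\<in>S. z a / (1 - z a))"
  using assms
proof (induction "card S" arbitrary: S rule: less_induct)
  case less
  define x where "x = (\<lambda>a. z a / (1 - z a))"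
  define k where "k = card S"
  define ZS where "ZS = (\<Prod>a\<in>S. z a)"
  show ?case
  proof (cases "S = {}")
    case True
    then show ?thesis by (simp add: phi_weight_def)
  next
    case False
    have weight: "phi_weight q (map z L) = ZS / (1 - ZS) * (\<Sum>i<k. phi_weight q (map z (take i L)) / qfact q (k - i))"
      if "L \<in> permutations_of_set S" for L
      using phi_weight_permutation[OF that less.prems(1) False] by (simp add: ZS_def k_def)
    \<comment> \<open>The prefixes of length \<open>i\<close> contribute the layer \<open>card T = i\<close> of the subset expansion.\<close>
    have layer: "(\<Sum>L\<in>permutations_of_set S. qratio_list q x L * phi_weight q (map z (take i L))) / qfact q (k - i)
        = (\<Sum>T | T \<subseteq> S \<and> card T = i. (\<Prod>a\<in>T. x a) * qratio_cut q x S T)" if "i < k" for i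
    proof -
      have "(\<Sum>L\<in>permutations_of_set T. qratio_list q x L * phi_weight q (map z L)) = (\<Prod>a\<in>T. x a)"
        if "T \<subseteq> S" "card T = i" for T
        using less.hyps[of T] less.prems \<open>i < k\<close> that finite_subset[OF that(1)] inj_on_subset[OF _ that(1)]
        by (auto simp: k_def x_def)
      then have "(\<Sum>L\<in>permutations_of_set S. qratio_list q x L * phi_weight q (map z (take i L)))
          = (\<Sum>T | T \<subseteq> S \<and> card T = i. (\<Prod>a\<in>T. x a) * qratio_cut q x S T) * qfact q (k - i)"
        using sum_permutations_prefix[of S x i q "\<lambda>L. phi_weight q (map z L)"] less.prems \<open>i < k\<close>
        by (simp add: k_def x_def qfact_eq_prod_sum)
      moreover have "qfact q (k - i) \<noteq> 0" using less.prems(4) by (simp add: k_def)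
      ultimately show ?thesis by simp
    qed
    have "(\<Sum>L\<in>permutations_of_set S. qratio_list q x L * phi_weight q (map z L))
        = ZS / (1 - ZS) * (\<Sum>i<k. (\<Sum>L\<in>permutations_of_set S. qratio_list q x L * phi_weight q (map z (take i L))) / qfact q (k - i))"
      by (simp add: weight sum_distrib_left sum_divide_distrib mult_ac cong: sum.cong)
        (subst sum.swap, simp)
    also have "\<dots> = ZS / (1 - ZS) * (\<Sum>i<k. \<Sum>T | T \<subseteq> S \<and> card T = i. (\<Prod>a\<in>T. x a) * qratio_cut q x S T)"
      using layer by simp
    also have "\<dots> = ZS / (1 - ZS) * (\<Sum>T\<in>Pow S - {S}. (\<Prod>a\<in>T. x a) * qratio_cut q x S T)"
      by (simp add: sum_subsets_by_card less.prems(1) k_def)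
    also have "\<dots> = ZS / (1 - ZS) * ((\<Prod>a\<in>S. 1 + x a) - (\<Prod>a\<in>S. x a))"
      using sum_Pow_prod_qratio_cut[of S x q] less.prems
      by (simp add: sum_diff1 qratio_cut_def x_def)
    also have "\<dots> = (\<Prod>a\<in>S. x a)"
    proof -
      have "norm ZS < 1" using norm_prod_less_one[OF less.prems(1) False] less.prems(3) by (simp add: ZS_def)
      then have "ZS \<noteq> 1" by auto
      moreover have "\<forall>a\<in>S. z a \<noteq> 1" using less.prems(3) by auto
      ultimately show ?thesis
        using prod_moebius_complement[OF less.prems(1), of z] by (simp add: x_def ZS_def)
    qed
    finally show ?thesis by (simp add: x_def)
  qed
qed

section \<open>Antisymmetrisation\<close>

definition increasing_pairs :: "'a::linorder set \<Rightarrow> ('a \<times> 'a) set" where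
  "increasing_pairs A = {(i, j). i \<in> A \<and> j \<in> A \<and> i < j}"

lemma finite_increasing_pairs: "finite A \<Longrightarrow> finite (increasing_pairs A)"
  by (rule finite_subset[of _ "A \<times> A"]) (auto simp: increasing_pairs_def)

lemma prod_increasing_pairs_atLeastAtMost:
  "(\<Prod>i\<in>{1..N}. \<Prod>j\<in>{i<..N}. f i j) = (\<Prod>(i, j)\<in>increasing_pairs {1..N::nat}. f i j)"
proof -
  have "Sigma {1..N} (\<lambda>i. {i<..N}) = increasing_pairs {1..N}"
    by (auto simp: increasing_pairs_def)
  then show ?thesis by (simp add: prod.Sigma)
qed

lemma bij_betw_permute_increasing_pairs:
  assumes "\<sigma> permutes A"
  shows "bij_betw (\<lambda>(i, j). (min (\<sigma> i) (\<sigma> j), max (\<sigma> i) (\<sigma> j))) (increasing_pairs A) (increasing_pairs A)"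
proof (rule bij_betw_byWitness[where f' = "\<lambda>(i, j). (min (inv \<sigma> i) (inv \<sigma> j), max (inv \<sigma> i) (inv \<sigma> j))"])
  have inv: "inv \<sigma> permutes A" using assms by (rule permutes_inv)
  have inj: "\<sigma> i \<noteq> \<sigma> j" "inv \<sigma> i \<noteq> inv \<sigma> j" if "i \<noteq> j" for i j
    using that permutes_inj[OF assms] permutes_inj[OF inv] by (auto dest: injD)
  show "\<forall>p\<in>increasing_pairs A. (\<lambda>(i, j). (min (inv \<sigma> i) (inv \<sigma> j), max (inv \<sigma> i) (inv \<sigma> j)))
      ((\<lambda>(i, j). (min (\<sigma> i) (\<sigma> j), max (\<sigma> i) (\<sigma> j))) p) = p"
    "\<forall>p\<in>increasing_pairs A. (\<lambda>(i, j). (min (\<sigma> i) (\<sigma> j), max (\<sigma> i) (\<sigma> j)))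
      ((\<lambda>(i, j). (min (inv \<sigma> i) (inv \<sigma> j), max (inv \<sigma> i) (inv \<sigma> j))) p) = p"
    using permutes_inverses[OF assms] by (auto simp: increasing_pairs_def min_def max_def)
  show "(\<lambda>(i, j). (min (\<sigma> i) (\<sigma> j), max (\<sigma> i) (\<sigma> j))) ` increasing_pairs A \<subseteq> increasing_pairs A"
    "(\<lambda>(i, j). (min (inv \<sigma> i) (inv \<sigma> j), max (inv \<sigma> i) (inv \<sigma> j))) ` increasing_pairs A \<subseteq> increasing_pairs A"
    using inj permutes_in_image[OF assms] permutes_in_image[OF inv]
    by (force simp: increasing_pairs_def min_def max_def)+
qed

lemma prod_increasing_pairs_sort:
  assumes "\<sigma> permutes A"
  shows "(\<Prod>(i, j)\<in>increasing_pairs A. h (min (\<sigma> i) (\<sigma> j)) (max (\<sigma> i) (\<sigma> j)))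
    = (\<Prod>(i, j)\<in>increasing_pairs A. h i j)"
  using prod.reindex_bij_betw[OF bij_betw_permute_increasing_pairs[OF assms], of "\<lambda>(i, j). h i j"]
  by (simp add: case_prod_beta)

lemma prod_increasing_pairs_permute_symmetric:
  assumes "\<sigma> permutes A" "\<And>a b. g a b = g b a"
  shows "(\<Prod>(i, j)\<in>increasing_pairs A. g (\<sigma> i) (\<sigma> j)) = (\<Prod>(i, j)\<in>increasing_pairs A. g i j)"
proof -
  have "g (\<sigma> i) (\<sigma> j) = g (min (\<sigma> i) (\<sigma> j)) (max (\<sigma> i) (\<sigma> j))" for i j
    using assms(2) by (cases "\<sigma> i \<le> \<sigma> j") (auto simp: min_def max_def)
  then show ?thesis
    using prod_increasing_pairs_sort[OF assms(1), of g] by simp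
qed

lemma prod_increasing_pairs_permute_diff_inversions:
  fixes y :: "'a::linorder \<Rightarrow> 'b::comm_ring_1"
  assumes "\<sigma> permutes A"
  shows "(\<Prod>(i, j)\<in>increasing_pairs A. y (\<sigma> i) - y (\<sigma> j))
    = (\<Prod>(i, j)\<in>increasing_pairs A. if \<sigma> i < \<sigma> j then 1 else -1) * (\<Prod>(i, j)\<in>increasing_pairs A. y i - y j)"
proof -
  have "y (\<sigma> i) - y (\<sigma> j)
      = (if \<sigma> i < \<sigma> j then 1 else -1) * (y (min (\<sigma> i) (\<sigma> j)) - y (max (\<sigma> i) (\<sigma> j)))" for i j
    by (cases "\<sigma> i \<le> \<sigma> j") (auto simp: min_def max_def)
  then show ?thesis
    using prod_increasing_pairs_sort[OF assms, of "\<lambda>a b. y a - y b"]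
    by (simp add: prod.distrib case_prod_beta)
qed

lemma prod_increasing_pairs_transpose_inversions:
  assumes "finite A" "a \<in> A" "b \<in> A" "a < b"
  shows "(\<Prod>(i, j)\<in>increasing_pairs A. if transpose a b i < transpose a b j then 1 else -1) = (-1 :: 'b::comm_ring_1)"
proof -
  define C where "C = {c \<in> A. a < c \<and> c < b}"
  have inversions: "{p \<in> increasing_pairs A. \<not> transpose a b (fst p) < transpose a b (snd p)}
      = insert (a, b) ((\<lambda>c. (a, c)) ` C \<union> (\<lambda>c. (c, b)) ` C)"
    using assms by (auto simp: increasing_pairs_def C_def transpose_def split: if_splits)
  have "card ((\<lambda>c. (a, c)) ` C \<union> (\<lambda>c. (c, b)) ` C) = 2 * card C"
    by (subst card_Un_disjoint) (auto simp: C_def card_image inj_on_def assms(1))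
  then have "card {p \<in> increasing_pairs A. \<not> transpose a b (fst p) < transpose a b (snd p)} = Suc (2 * card C)"
    unfolding inversions by (subst card_insert_disjoint) (auto simp: C_def assms(1))
  then show ?thesis
    using finite_increasing_pairs[OF assms(1)]
    by (simp add: case_prod_beta prod.If_cases Int_def)
qed

lemma prod_increasing_pairs_permute_diff:
  fixes y :: "'a::linorder \<Rightarrow> 'b::comm_ring_1"
  assumes "finite A" "\<sigma> permutes A"
  shows "(\<Prod>(i, j)\<in>increasing_pairs A. y (\<sigma> i) - y (\<sigma> j)) = of_int (sign \<sigma>) * (\<Prod>(i, j)\<in>increasing_pairs A. y i - y j)"
  using assms(2,1)
proof (induction arbitrary: y rule: permutes_induct)
  case id
  then show ?case by simp
next
  case (swap a b p)
  have transpose: "(\<Prod>(i, j)\<in>increasing_pairs A. y (transpose a b i) - y (transpose a b j))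
      = - (\<Prod>(i, j)\<in>increasing_pairs A. y i - y j)"
  proof (cases "a < b")
    case True
    then show ?thesis
      using prod_increasing_pairs_permute_diff_inversions[OF permutes_swap_id[OF swap.hyps(1,2)], of y]
        prod_increasing_pairs_transpose_inversions[OF assms(1) swap.hyps(1,2) True, where 'b = 'b] by simp
  next
    case False
    then have "b < a" using swap.hyps(3) by simp
    then show ?thesis
      using prod_increasing_pairs_permute_diff_inversions[OF permutes_swap_id[OF swap.hyps(1,2)], of y]
        prod_increasing_pairs_transpose_inversions[OF assms(1) swap.hyps(2,1) \<open>b < a\<close>, where 'b = 'b]
      by (simp add: transpose_commute)
  qed
  have "permutation p" using swap.hyps(4) assms(1) permutation_permutes by blast
  then have "sign (transpose a b \<circ> p) = - sign p"
    using sign_compose[OF permutation_swap_id, of p a b] swap.hyps(3) by (simp add: sign_swap_id)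
  then show ?case
    using swap.IH[of "y \<circ> transpose a b"] transpose by (simp add: comp_def)
qed

lemma bij_betw_map_permutes:
  assumes "distinct xs" "set xs = A"
  shows "bij_betw (\<lambda>\<sigma>. map \<sigma> xs) {\<sigma>. \<sigma> permutes A} (permutations_of_set A)"
proof (rule bij_betw_imageI)
  show "inj_on (\<lambda>\<sigma>. map \<sigma> xs) {\<sigma>. \<sigma> permutes A}"
  proof (rule inj_onI, rule ext)
    fix \<sigma> \<tau> i assume "\<sigma> \<in> {\<sigma>. \<sigma> permutes A}" "\<tau> \<in> {\<sigma>. \<sigma> permutes A}" "map \<sigma> xs = map \<tau> xs"
    then show "\<sigma> i = \<tau> i"
      using assms(2) by (cases "i \<in> A") (auto simp: permutes_not_in map_eq_conv)
  qed
  show "(\<lambda>\<sigma>. map \<sigma> xs) ` {\<sigma>. \<sigma> permutes A} = permutations_of_set A"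
  proof safe
    fix \<sigma> assume "\<sigma> permutes A"
    then show "map \<sigma> xs \<in> permutations_of_set A"
      using assms by (auto simp: permutations_of_set_def distinct_map permutes_image
        intro: inj_on_subset[OF permutes_inj_on])
  next
    fix L assume L: "L \<in> permutations_of_set A"
    then have "length L = length xs"
      using assms by (simp add: length_finite_permutations_of_set distinct_card[symmetric])
    with L assms have perm: "list_permutes (zip xs L) A"
      by (simp add: list_permutes_def permutations_of_set_def)
    have "map (permutation_of_list (zip xs L)) xs = L"
      using \<open>length L = length xs\<close> assms(1)
      by (intro nth_equalityI) (auto intro!: permutation_of_list_unique' simp: in_set_zip)
    then show "L \<in> (\<lambda>\<sigma>. map \<sigma> xs) ` {\<sigma>. \<sigma> permutes A}"
      using permutation_of_list_permutes[OF perm] by force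
  qed
qed

lemma moebius_qdiff:
  fixes a b q :: "'a::field"
  assumes "a \<noteq> 1" "b \<noteq> 1"
  shows "a - q * b - (1 - q) * a * b = (a / (1 - a) - q * (b / (1 - b))) * ((1 - a) * (1 - b))"
proof -
  have "1 - a \<noteq> 0" "1 - b \<noteq> 0" using assms by auto
  then show ?thesis by (simp add: divide_simps) (simp add: algebra_simps)
qed

lemma inj_on_moebius:
  fixes z :: "'i \<Rightarrow> 'a::field"
  assumes "inj_on z S" "\<forall>a\<in>S. z a \<noteq> 1"
  shows "inj_on (\<lambda>a. z a / (1 - z a)) S"
proof (rule inj_onI)
  fix a b assume ab: "a \<in> S" "b \<in> S" and "z a / (1 - z a) = z b / (1 - z b)"
  then have "z a * (1 - z b) = z b * (1 - z a)"
    using assms(2) by (simp add: divide_simps split: if_splits)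
  then show "a = b"
    using assms(1) ab by (simp add: algebra_simps inj_on_eq_iff)
qed

lemma prod_increasing_pairs_qratio:
  "(\<Prod>(i, j)\<in>increasing_pairs {1..N}. qratio q x (\<sigma> i) (\<sigma> j)) = qratio_list q x (map \<sigma> [1..<Suc N])"
proof -
  have "{1..<Suc N} = {1..N}" "\<And>i. {i<..<Suc N} = {i<..N}" by auto
  then show ?thesis
    unfolding prod_increasing_pairs_atLeastAtMost[symmetric] qratio_list_map_upt by simp
qed

lemma prod_increasing_pairs_diff_moebius:
  fixes z :: "'i::linorder \<Rightarrow> 'a::field"
  assumes "\<forall>i\<in>A. z i \<noteq> 1"
  shows "(\<Prod>(i, j)\<in>increasing_pairs A. z i - z j)
    = (\<Prod>(i, j)\<in>increasing_pairs A. z i / (1 - z i) - z j / (1 - z j))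
      * (\<Prod>(i, j)\<in>increasing_pairs A. (1 - z i) * (1 - z j))"
proof -
  have "z i - z j = (z i / (1 - z i) - z j / (1 - z j)) * ((1 - z i) * (1 - z j))"
    if "(i, j) \<in> increasing_pairs A" for i j
    using moebius_qdiff[of "z i" "z j" 1] that assms by (auto simp: increasing_pairs_def)
  then show ?thesis
    by (simp add: prod.distrib[symmetric] case_prod_beta cong: prod.cong)
qed

lemma sign_mult_prod_qdiff_permute:
  fixes z :: "nat \<Rightarrow> complex"
  assumes "\<sigma> permutes {1..N}" "\<forall>i\<in>{1..N}. z i \<noteq> 1" "inj_on (\<lambda>a. z a / (1 - z a)) {1..N}"
  shows "of_int (sign \<sigma>) * (\<Prod>i\<in>{1..N}. \<Prod>j\<in>{i<..N}. z (\<sigma> i) - q * z (\<sigma> j) - (1 - q) * z (\<sigma> i) * z (\<sigma> j))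
    = (\<Prod>i\<in>{1..N}. \<Prod>j\<in>{i<..N}. z i - z j) * qratio_list q (\<lambda>a. z a / (1 - z a)) (map \<sigma> [1..<Suc N])"
proof -
  define x where "x = (\<lambda>a. z a / (1 - z a))"
  define P where "P = increasing_pairs {1..N}"
  have pair: "z (\<sigma> i) - q * z (\<sigma> j) - (1 - q) * z (\<sigma> i) * z (\<sigma> j)
      = (x (\<sigma> i) - x (\<sigma> j)) * qratio q x (\<sigma> i) (\<sigma> j) * ((1 - z (\<sigma> i)) * (1 - z (\<sigma> j)))"
    if "(i, j) \<in> P" for i j
  proof -
    have "i \<in> {1..N}" "j \<in> {1..N}" "i \<noteq> j" using that by (auto simp: P_def increasing_pairs_def)
    then have "\<sigma> i \<in> {1..N}" "\<sigma> j \<in> {1..N}" "\<sigma> i \<noteq> \<sigma> j"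
      using permutes_in_image[OF assms(1)] permutes_inj[OF assms(1)] by (auto dest: injD)
    then have "x (\<sigma> i) \<noteq> x (\<sigma> j)" "z (\<sigma> i) \<noteq> 1" "z (\<sigma> j) \<noteq> 1"
      using assms(2,3) by (auto simp: x_def dest: inj_onD)
    then show ?thesis
      using moebius_qdiff[of "z (\<sigma> i)" "z (\<sigma> j)" q] by (simp add: x_def qratio_def)
  qed
  have "(\<Prod>i\<in>{1..N}. \<Prod>j\<in>{i<..N}. z (\<sigma> i) - q * z (\<sigma> j) - (1 - q) * z (\<sigma> i) * z (\<sigma> j))
      = (\<Prod>(i, j)\<in>P. x (\<sigma> i) - x (\<sigma> j)) * (\<Prod>(i, j)\<in>P. qratio q x (\<sigma> i) (\<sigma> j))
        * (\<Prod>(i, j)\<in>P. (1 - z (\<sigma> i)) * (1 - z (\<sigma> j)))"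
    unfolding prod_increasing_pairs_atLeastAtMost P_def[symmetric]
    by (simp add: pair prod.distrib[symmetric] case_prod_beta cong: prod.cong)
  also have "\<dots> = of_int (sign \<sigma>) * (\<Prod>(i, j)\<in>P. x i - x j) * qratio_list q x (map \<sigma> [1..<Suc N])
        * (\<Prod>(i, j)\<in>P. (1 - z i) * (1 - z j))"
  proof -
    have "(\<Prod>(i, j)\<in>P. x (\<sigma> i) - x (\<sigma> j)) = of_int (sign \<sigma>) * (\<Prod>(i, j)\<in>P. x i - x j)"
      unfolding P_def by (rule prod_increasing_pairs_permute_diff[OF _ assms(1)]) simp
    moreover have "(\<Prod>(i, j)\<in>P. (1 - z (\<sigma> i)) * (1 - z (\<sigma> j))) = (\<Prod>(i, j)\<in>P. (1 - z i) * (1 - z j))"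
      unfolding P_def by (rule prod_increasing_pairs_permute_symmetric[OF assms(1)]) simp
    ultimately show ?thesis
      unfolding prod_increasing_pairs_qratio[of q x \<sigma> N, folded P_def] by (simp only:)
  qed
  also have "\<dots> = of_int (sign \<sigma>) * (\<Prod>i\<in>{1..N}. \<Prod>j\<in>{i<..N}. z i - z j) * qratio_list q x (map \<sigma> [1..<Suc N])"
  proof -
    have VK: "(\<Prod>(i, j)\<in>P. x i - x j) * (\<Prod>(i, j)\<in>P. (1 - z i) * (1 - z j)) = (\<Prod>i\<in>{1..N}. \<Prod>j\<in>{i<..N}. z i - z j)"
      unfolding P_def x_def prod_increasing_pairs_atLeastAtMost
      using prod_increasing_pairs_diff_moebius[of "{1..N}" z] assms(2) by simp
    show ?thesis
      by (subst VK[symmetric]) (simp only: ac_simps)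
  qed
  finally have factored: "(\<Prod>i\<in>{1..N}. \<Prod>j\<in>{i<..N}. z (\<sigma> i) - q * z (\<sigma> j) - (1 - q) * z (\<sigma> i) * z (\<sigma> j))
      = of_int (sign \<sigma>) * (\<Prod>i\<in>{1..N}. \<Prod>j\<in>{i<..N}. z i - z j) * qratio_list q x (map \<sigma> [1..<Suc N])" .
  have "of_int (sign \<sigma>) * of_int (sign \<sigma>) = (1 :: complex)"
    by (metis of_int_1 of_int_mult sign_idempotent)
  then show ?thesis
    by (simp only: factored x_def mult.assoc[symmetric] mult_1_left)
qed

definition antisymmetrized_F :: "nat \<Rightarrow> complex \<Rightarrow> (nat \<Rightarrow> complex) \<Rightarrow> complex" where
  "antisymmetrized_F N q z = (\<Sum>\<sigma> | \<sigma> permutes {1..N}.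
     of_int (sign \<sigma>) *
     (\<Prod>i\<in>{1..N}. \<Prod>j\<in>{i<..N}.
        (z (\<sigma> i) - q * z (\<sigma> j) - (1 - q) * z (\<sigma> i) * z (\<sigma> j))) *
     Fsig N q z \<sigma>)"

definition vandermonde_ratio :: "nat \<Rightarrow> (nat \<Rightarrow> complex) \<Rightarrow> complex" where
  "vandermonde_ratio N z = (\<Prod>i\<in>{1..N}. \<Prod>j\<in>{i<..N}. (z i - z j)) / (\<Prod>i=1..N. (1 - z i))"

lemma antisymmetrized_F_distinct_nonzero:
  fixes z :: "nat \<Rightarrow> complex"
  assumes "N \<ge> 1" "\<forall>k\<in>{1..N}. qint q k \<noteq> 0" "\<forall>i\<in>{1..N}. norm (z i) < 1"
    and "inj_on z {1..N}" "\<forall>i\<in>{1..N}. z i \<noteq> 0"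
  shows "antisymmetrized_F N q z = vandermonde_ratio N z"
proof -
  define x where "x = (\<lambda>a. z a / (1 - z a))"
  define Z where "Z = (\<Prod>a\<in>{1..N}. z a)"
  define D where "D = (\<Prod>i\<in>{1..N}. \<Prod>j\<in>{i<..N}. z i - z j)"
  define L where "L \<sigma> = map \<sigma> [1..<Suc N]" for \<sigma> :: "nat \<Rightarrow> nat"
  have z1: "\<forall>i\<in>{1..N}. z i \<noteq> 1" using assms(3) by auto
  have injx: "inj_on x {1..N}" unfolding x_def using inj_on_moebius[OF assms(4) z1] .
  have "Z \<noteq> 0" using assms(5) by (simp add: Z_def)
  have summand: "of_int (sign \<sigma>) * (\<Prod>i\<in>{1..N}. \<Prod>j\<in>{i<..N}. z (\<sigma> i) - q * z (\<sigma> j) - (1 - q) * z (\<sigma> i) * z (\<sigma> j))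
      * Fsig N q z \<sigma> = D / Z * (qratio_list q x (L \<sigma>) * phi_weight q (map z (L \<sigma>)))"
    if \<sigma>: "\<sigma> permutes {1..N}" for \<sigma>
  proof -
    have "Fsig N q z \<sigma> * Z = phi_weight q (map z (L \<sigma>))"
      using Phi_mult_prod_eq_phi_weight[of N q "z \<circ> \<sigma>"] prod.permute[OF \<sigma>, of z] assms(1)
      by (simp add: Fsig_def Z_def L_def comp_def)
    then show ?thesis
      using sign_mult_prod_qdiff_permute[OF \<sigma> z1 injx[unfolded x_def], of q] \<open>Z \<noteq> 0\<close>
      by (simp add: D_def L_def x_def field_simps)
  qed
  have "antisymmetrized_F N q z = D / Z * (\<Sum>\<sigma> | \<sigma> permutes {1..N}. qratio_list q x (L \<sigma>) * phi_weight q (map z (L \<sigma>)))"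
    unfolding antisymmetrized_F_def sum_distrib_left by (rule sum.cong) (simp_all only: mem_Collect_eq summand)
  also have "(\<Sum>\<sigma> | \<sigma> permutes {1..N}. qratio_list q x (L \<sigma>) * phi_weight q (map z (L \<sigma>)))
      = (\<Sum>L\<in>permutations_of_set {1..N}. qratio_list q x L * phi_weight q (map z L))"
  proof -
    have "distinct [1..<Suc N]" "set [1..<Suc N] = {1..N}" by auto
    from sum.reindex_bij_betw[OF bij_betw_map_permutes[OF this], of "\<lambda>L. qratio_list q x L * phi_weight q (map z L)"]
    show ?thesis
      by (simp add: L_def del: upt_Suc)
  qed
  also have "\<dots> = (\<Prod>a\<in>{1..N}. x a)"
    using sum_permutations_qratio_list_phi_weight[of "{1..N}" z q] injx assms(2,3)
    by (simp add: x_def qfact_def)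
  also have "D / Z * \<dots> = vandermonde_ratio N z"
    using \<open>Z \<noteq> 0\<close> by (simp add: vandermonde_ratio_def x_def Z_def D_def prod_dividef)
  finally show ?thesis .
qed

section \<open>Removing the genericity assumptions\<close>

lemma isCont_eq_off_finite:
  fixes f g :: "'a::{perfect_space, t2_space} \<Rightarrow> 'b::t2_space"
  assumes "isCont f x" "isCont g x" "open U" "x \<in> U" "finite B"
    and "\<And>y. y \<in> U \<Longrightarrow> y \<notin> B \<Longrightarrow> f y = g y"
  shows "f x = g x"
proof -
  have "open (U - (B - {x}))" "x \<in> U - (B - {x})"
    using assms(3-5) by (auto intro: finite_imp_closed)
  then have "eventually (\<lambda>y. y \<in> U - (B - {x})) (nhds x)"
    by (rule eventually_nhds_in_open)
  then have "eventually (\<lambda>y. f y = g y) (at x)"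
    unfolding eventually_at_filter by eventually_elim (use assms(6) in auto)
  then have "(g \<longlongrightarrow> f x) (at x)"
    using assms(1) by (simp add: isCont_def tendsto_cong)
  then show ?thesis
    using assms(2) tendsto_unique[OF at_neq_bot] unfolding isCont_def by blast
qed

lemma eq_by_separate_continuity:
  fixes f g :: "('i \<Rightarrow> 'a::{perfect_space, t2_space}) \<Rightarrow> 'b::t2_space"
  assumes "finite I" "open D" "finite E"
    and cont: "\<And>w c. \<forall>i\<in>I. w i \<in> D \<Longrightarrow> c \<in> I \<Longrightarrow>
      isCont (\<lambda>\<zeta>. f (w(c := \<zeta>))) (w c) \<and> isCont (\<lambda>\<zeta>. g (w(c := \<zeta>))) (w c)"
    and generic: "\<And>w. \<forall>i\<in>I. w i \<in> D \<Longrightarrow> inj_on w I \<Longrightarrow> \<forall>i\<in>I. w i \<notin> E \<Longrightarrow> f w = g w"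
    and "\<forall>i\<in>I. w i \<in> D"
  shows "f w = g w"
proof -
  \<comment> \<open>Induction on the set \<open>J\<close> of coordinates that may still be non-generic; the coordinate
    \<open>c\<close> is moved to generic values \<open>\<zeta>\<close> and recovered as the limit \<open>\<zeta> \<rightarrow> w c\<close>.\<close>
  have "f w = g w" if "finite J" "J \<subseteq> I" "\<forall>i\<in>I. w i \<in> D"
    "\<forall>i\<in>I - J. w i \<notin> E \<and> (\<forall>j\<in>I. w j = w i \<longrightarrow> j = i)" for J w
    using that
  proof (induction J arbitrary: w rule: finite_induct)
    case empty
    then show ?case by (intro generic) (auto intro: inj_onI)
  next
    case (insert c J)
    have perturbed: "f (w(c := \<zeta>)) = g (w(c := \<zeta>))" if \<zeta>: "\<zeta> \<in> D" "\<zeta> \<notin> E \<union> w ` (I - {c})" for \<zeta>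
    proof (rule insert.IH)
      show "J \<subseteq> I" "\<forall>i\<in>I. (w(c := \<zeta>)) i \<in> D"
        using insert.prems(1,2) \<zeta>(1) by auto
      show "\<forall>i\<in>I - J. (w(c := \<zeta>)) i \<notin> E \<and> (\<forall>j\<in>I. (w(c := \<zeta>)) j = (w(c := \<zeta>)) i \<longrightarrow> j = i)"
        using insert.prems(3) \<zeta>(2) by (auto simp: image_iff)
    qed
    have "c \<in> I" "w c \<in> D" using insert.prems(1,2) by auto
    note continuous = cont[OF insert.prems(2) \<open>c \<in> I\<close>]
    have "f (w(c := w c)) = g (w(c := w c))"
      by (rule isCont_eq_off_finite[OF continuous[THEN conjunct1] continuous[THEN conjunct2] assms(2) \<open>w c \<in> D\<close>,
            of "E \<union> w ` (I - {c})"]) (use assms(1,3) perturbed in auto)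
    then show ?case by simp
  qed
  from this[of I] show ?thesis using assms(1,6) by simp
qed

lemma isCont_fun_upd [continuous_intros]: "isCont (\<lambda>\<zeta>. (w(c := \<zeta>)) a) x"
  by (cases "a = c") simp_all

lemma one_minus_prod_nonzero:
  fixes w :: "nat \<Rightarrow> 'a::real_normed_field"
  assumes "\<forall>i\<in>{1..N}. norm (w i) < 1" "1 \<le> M" "M \<le> N"
  shows "1 - (\<Prod>j=1..M. w j) \<noteq> 0"
  using norm_prod_less_one[of "{1..M}" w] assms by force

lemma isCont_tvar:
  fixes w :: "'a::t2_space \<Rightarrow> nat \<Rightarrow> complex"
  assumes "\<forall>i\<in>{1..N}. isCont (\<lambda>\<zeta>. w \<zeta> i) x" "\<forall>i\<in>{1..N}. norm (w x i) < 1"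
  shows "isCont (\<lambda>\<zeta>. tvar N (w \<zeta>) t) x"
proof (cases "N - t = 0")
  case True
  \<comment> \<open>then \<open>tvar N (w \<zeta>) t = 1 / 0 = 0\<close> for every \<open>\<zeta>\<close>\<close>
  then show ?thesis by (simp add: tvar_def)
next
  case False
  then show ?thesis
    unfolding tvar_def using assms one_minus_prod_nonzero[OF assms(2), of "N - t"]
    by (intro continuous_intros) auto
qed

lemma isCont_Phi:
  fixes w :: "'a::t2_space \<Rightarrow> nat \<Rightarrow> complex"
  assumes "N \<noteq> 0" "\<forall>i\<in>{1..N}. isCont (\<lambda>\<zeta>. w \<zeta> i) x" "\<forall>i\<in>{1..N}. norm (w x i) < 1"
  shows "isCont (\<lambda>\<zeta>. Phi N q (w \<zeta>)) x"
  unfolding Phi_def using assms one_minus_prod_nonzero[OF assms(3), of N]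
  by (intro continuous_intros isCont_tvar) auto

lemma isCont_antisymmetrized_F:
  fixes w :: "'a::t2_space \<Rightarrow> nat \<Rightarrow> complex"
  assumes "N \<noteq> 0" "\<forall>i\<in>{1..N}. isCont (\<lambda>\<zeta>. w \<zeta> i) x" "\<forall>i\<in>{1..N}. norm (w x i) < 1"
  shows "isCont (\<lambda>\<zeta>. antisymmetrized_F N q (w \<zeta>)) x"
  unfolding antisymmetrized_F_def Fsig_def using assms
  by (intro continuous_intros isCont_Phi) (auto dest: permutes_in_image)

lemma isCont_vandermonde_ratio:
  fixes w :: "'a::t2_space \<Rightarrow> nat \<Rightarrow> complex"
  assumes "\<forall>i\<in>{1..N}. isCont (\<lambda>\<zeta>. w \<zeta> i) x" "\<forall>i\<in>{1..N}. norm (w x i) < 1"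
  shows "isCont (\<lambda>\<zeta>. vandermonde_ratio N (w \<zeta>)) x"
proof -
  have "w x i \<noteq> 1" if "i \<in> {1..N}" for i
    using assms(2) that by fastforce
  then show ?thesis
    unfolding vandermonde_ratio_def using assms by (intro continuous_intros) auto
qed

theorem proposition2:
  fixes N :: nat and q :: complex and z :: "nat \<Rightarrow> complex"
  assumes "N \<ge> 1"
    and "\<forall>k\<in>{1..N}. qint q k \<noteq> 0"
    and "\<forall>i\<in>{1..N}. norm (z i) < 1"
  shows "(\<Sum>\<sigma> | \<sigma> permutes {1..N}.
            of_int (sign \<sigma>) *
            (\<Prod>i\<in>{1..N}. \<Prod>j\<in>{i<..N}.
               (z (\<sigma> i) - q * z (\<sigma> j) - (1 - q) * z (\<sigma> i) * z (\<sigma> j))) *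
            Fsig N q z \<sigma>)
         = (\<Prod>i\<in>{1..N}. \<Prod>j\<in>{i<..N}. (z i - z j)) / (\<Prod>i=1..N. (1 - z i))"
proof -
  have "antisymmetrized_F N q z = vandermonde_ratio N z"
  proof (rule eq_by_separate_continuity[where f = "antisymmetrized_F N q" and g = "vandermonde_ratio N"
        and I = "{1..N}" and D = "{\<zeta>. norm \<zeta> < 1}" and E = "{0}"])
    fix w :: "nat \<Rightarrow> complex" and c assume "\<forall>i\<in>{1..N}. w i \<in> {\<zeta>. norm \<zeta> < 1}" "c \<in> {1..N}"
    then show "isCont (\<lambda>\<zeta>. antisymmetrized_F N q (w(c := \<zeta>))) (w c)
        \<and> isCont (\<lambda>\<zeta>. vandermonde_ratio N (w(c := \<zeta>))) (w c)"
      using assms(1) by (auto intro!: isCont_antisymmetrized_F isCont_vandermonde_ratio continuous_intros)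
  next
    fix w :: "nat \<Rightarrow> complex" assume "\<forall>i\<in>{1..N}. w i \<in> {\<zeta>. norm \<zeta> < 1}" "inj_on w {1..N}" "\<forall>i\<in>{1..N}. w i \<notin> {0}"
    then show "antisymmetrized_F N q w = vandermonde_ratio N w"
      using assms(1,2) by (intro antisymmetrized_F_distinct_nonzero) auto
  qed (use assms(3) open_Collect_less[of "\<lambda>\<zeta>::complex. norm \<zeta>" "\<lambda>_. 1"] in \<open>auto intro: continuous_intros\<close>)
  then show ?thesis
    unfolding antisymmetrized_F_def vandermonde_ratio_def .
qed

end
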